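(* Let $X$ be a C*-correspondence of finite rank over $A$ and let $\beta>0$. If $\tau\in\operatorname{Avt}_\beta(A)$ then $c_{\tau,\beta}=\infty$.
   Context: $X$ is a C*-correspondence over $A$ (right Hilbert $A$-module with left action $\phi_X\colon A\to\mathcal{L}(X)$). $X$ has finite rank if there are $x_1,\dots,x_d$ in the unit ball of $X$ with $\sum_{i=1}^d\theta_{x_i,x_i}=1_X$, where $\theta_{\xi,\eta}(\zeta)=\xi\langle\eta,\zeta\rangle$ (a unit decomposition). For a word $\mu=\mu_n\cdots\mu_1$ on $\{1,\dots,d\}$ put $x_\mu=x_{\mu_n}\otimes\cdots\otimes x_{\mu_1}\in X^{\otimes n}$, and $x_\emptyset=1$ (unit of $A$ or of its unitization). $\operatorname{Tr}(A)$ denotes the tracial states of $A$ (extended to the unitization when needed). For $\tau\in\operatorname{Tr}(A)$ and $\beta>0$, $c_{\tau,\beta}:=\sum_{k=0}^\infty e^{-k\beta}\sum_{|\mu|=k}\tau(\langle x_\mu,x_\mu\rangle)$ (the $k=0$ term being $1$), a value in $[1,\infty]$ independent of the unit decomposition. $\operatorname{Avt}_\beta(A)$ is the set of $\tau\in\operatorname{Tr}(A)$ with $\tau(a)=e^{-\beta}\sum_{i=1}^d\tau(\langle x_i,ax_i\rangle)$ for all $a\in A$. *)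

theory Defs
  imports "HOL-Analysis.Analysis" "HOL-Library.Extended_Nonnegative_Real"
begin

text \<open>C*-algebra A: a real Banach algebra (type class) with a complex scalar
  multiplication sc and an involution st satisfying the C*-identity.\<close>

definition cstar_algebra ::
  "(complex \<Rightarrow> 'a::{real_normed_algebra,banach} \<Rightarrow> 'a) \<Rightarrow> ('a \<Rightarrow> 'a) \<Rightarrow> bool" where
  "cstar_algebra sc st \<longleftrightarrow>
     (\<forall>r x. sc (complex_of_real r) x = r *\<^sub>R x) \<and>
     (\<forall>c e x. sc (c * e) x = sc c (sc e x)) \<and>
     (\<forall>c e x. sc (c + e) x = sc c x + sc e x) \<and>
     (\<forall>c x y. sc c (x + y) = sc c x + sc c y) \<and>
     (\<forall>c x y. sc c (x * y) = sc c x * y \<and> sc c (x * y) = x * sc c y) \<and>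
     (\<forall>c x. norm (sc c x) = cmod c * norm x) \<and>
     (\<forall>x. st (st x) = x) \<and>
     (\<forall>x y. st (x + y) = st x + st y) \<and>
     (\<forall>c x. st (sc c x) = sc (cnj c) (st x)) \<and>
     (\<forall>x y. st (x * y) = st y * st x) \<and>
     (\<forall>x. norm (st x * x) = (norm x)\<^sup>2)"

definition cstar_positive :: "('a::times \<Rightarrow> 'a) \<Rightarrow> 'a \<Rightarrow> bool" where
  "cstar_positive st a \<longleftrightarrow> (\<exists>b. a = st b * b)"

definition tracial_state ::
  "(complex \<Rightarrow> 'a::{real_normed_algebra,banach} \<Rightarrow> 'a) \<Rightarrow> ('a \<Rightarrow> 'a) \<Rightarrow> ('a \<Rightarrow> complex) \<Rightarrow> bool" where
  "tracial_state sc st \<tau> \<longleftrightarrow>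
     (\<forall>x y. \<tau> (x + y) = \<tau> x + \<tau> y) \<and>
     (\<forall>c x. \<tau> (sc c x) = c * \<tau> x) \<and>
     (\<forall>a. cstar_positive st a \<longrightarrow> Im (\<tau> a) = 0 \<and> 0 \<le> Re (\<tau> a)) \<and>
     (\<forall>x y. \<tau> (x * y) = \<tau> (y * x)) \<and>
     onorm \<tau> = 1"

definition cstar_correspondence ::
  "(complex \<Rightarrow> 'a::{real_normed_algebra,banach} \<Rightarrow> 'a) \<Rightarrow> ('a \<Rightarrow> 'a) \<Rightarrow>
   (complex \<Rightarrow> 'x::banach \<Rightarrow> 'x) \<Rightarrow> ('x \<Rightarrow> 'a \<Rightarrow> 'x) \<Rightarrow> ('x \<Rightarrow> 'x \<Rightarrow> 'a) \<Rightarrow>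
   ('a \<Rightarrow> 'x \<Rightarrow> 'x) \<Rightarrow> bool" where
  "cstar_correspondence sc st scX ra ip phi \<longleftrightarrow>
     cstar_algebra sc st \<and>
     \<comment> \<open>complex vector space structure compatible with the real one\<close>
     (\<forall>r x. scX (complex_of_real r) x = r *\<^sub>R x) \<and>
     (\<forall>c e x. scX (c * e) x = scX c (scX e x)) \<and>
     (\<forall>c e x. scX (c + e) x = scX c x + scX e x) \<and>
     (\<forall>c x y. scX c (x + y) = scX c x + scX c y) \<and>
     \<comment> \<open>right A-module\<close>
     (\<forall>x y a. ra (x + y) a = ra x a + ra y a) \<and>
     (\<forall>x a b. ra x (a + b) = ra x a + ra x b) \<and>
     (\<forall>x a b. ra (ra x a) b = ra x (a * b)) \<and>
     (\<forall>c x a. scX c (ra x a) = ra (scX c x) a \<and> scX c (ra x a) = ra x (sc c a)) \<and>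
     \<comment> \<open>A-valued inner product\<close>
     (\<forall>x y z. ip x (y + z) = ip x y + ip x z) \<and>
     (\<forall>x y c. ip x (scX c y) = sc c (ip x y)) \<and>
     (\<forall>x y a. ip x (ra y a) = ip x y * a) \<and>
     (\<forall>x y. ip y x = st (ip x y)) \<and>
     (\<forall>x. cstar_positive st (ip x x)) \<and>
     (\<forall>x. ip x x = 0 \<longrightarrow> x = 0) \<and>
     (\<forall>x. norm x = sqrt (norm (ip x x))) \<and>
     \<comment> \<open>left action by adjointable operators, a *-homomorphism\<close>
     (\<forall>a x y. phi a (x + y) = phi a x + phi a y) \<and>
     (\<forall>a c x. phi a (scX c x) = scX c (phi a x)) \<and>
     (\<forall>a x b. phi a (ra x b) = ra (phi a x) b) \<and>
     (\<forall>a b x. phi (a + b) x = phi a x + phi b x) \<and>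
     (\<forall>c a x. phi (sc c a) x = scX c (phi a x)) \<and>
     (\<forall>a b x. phi (a * b) x = phi a (phi b x)) \<and>
     (\<forall>a x y. ip (phi a x) y = ip x (phi (st a) y))"

text \<open>Unit decomposition x_1..x_d: vectors in the unit ball with
  sum_i theta_{x_i,x_i} = 1_X, theta_{xi,eta}(zeta) = xi <eta,zeta>.\<close>

definition unit_decomposition ::
  "('x::real_normed_vector \<Rightarrow> 'a \<Rightarrow> 'x) \<Rightarrow> ('x \<Rightarrow> 'x \<Rightarrow> 'a) \<Rightarrow> nat \<Rightarrow> (nat \<Rightarrow> 'x) \<Rightarrow> bool" where
  "unit_decomposition ra ip d xs \<longleftrightarrow>
     (\<forall>i\<in>{1..d}. norm (xs i) \<le> 1) \<and>
     (\<forall>z. (\<Sum>i=1..d. ra (xs i) (ip (xs i) z)) = z)"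

text \<open>Inner products in the internal tensor power X^{\<otimes>n}:
  for a word w = [w_1,...,w_m] (w_1 leftmost), tens_ip a w = <x_w, phi^{(m)}(a) x_w>
  where phi^{(m)}(a)(y_1 \<otimes> ... \<otimes> y_m) = phi(a) y_1 \<otimes> y_2 \<otimes> ... \<otimes> y_m,
  using <xi \<otimes> eta, xi' \<otimes> eta'> = <eta, phi(<xi,xi'>) eta'>.\<close>

fun tens_ip :: "('x \<Rightarrow> 'x \<Rightarrow> 'a) \<Rightarrow> ('a \<Rightarrow> 'x \<Rightarrow> 'x) \<Rightarrow> (nat \<Rightarrow> 'x) \<Rightarrow> 'a \<Rightarrow> nat list \<Rightarrow> 'a" where
  "tens_ip ip phi xs a [] = a"
| "tens_ip ip phi xs a (i # w) = tens_ip ip phi xs (ip (xs i) (phi a (xs i))) w"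

text \<open>For a nonempty word mu = mu_n ... mu_1 (list [mu_n,...,mu_1]),
  x_mu = x_{mu_n} \<otimes> ... \<otimes> x_{mu_1} and word_ip gives <x_mu, x_mu> in A.\<close>

fun word_ip :: "('x \<Rightarrow> 'x \<Rightarrow> 'a) \<Rightarrow> ('a \<Rightarrow> 'x \<Rightarrow> 'x) \<Rightarrow> (nat \<Rightarrow> 'x) \<Rightarrow> nat list \<Rightarrow> 'a" where
  "word_ip ip phi xs [] = undefined"
| "word_ip ip phi xs (i # w) = tens_ip ip phi xs (ip (xs i) (xs i)) w"

definition words :: "nat \<Rightarrow> nat \<Rightarrow> nat list set" where
  "words d k = {\<mu>. length \<mu> = k \<and> set \<mu> \<subseteq> {1..d}}"

definition c_tau_beta ::
  "('x \<Rightarrow> 'x \<Rightarrow> 'a) \<Rightarrow> ('a \<Rightarrow> 'x \<Rightarrow> 'x) \<Rightarrow> nat \<Rightarrow> (nat \<Rightarrow> 'x) \<Rightarrow> ('a \<Rightarrow> complex) \<Rightarrow> real \<Rightarrow> ennreal" where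
  "c_tau_beta ip phi d xs \<tau> \<beta> =
     (\<Sum>k. ennreal (exp (- real k * \<beta>) *
        (if k = 0 then 1 else (\<Sum>\<mu>\<in>words d k. Re (\<tau> (word_ip ip phi xs \<mu>))))))"

definition Avt ::
  "(complex \<Rightarrow> 'a::{real_normed_algebra,banach} \<Rightarrow> 'a) \<Rightarrow> ('a \<Rightarrow> 'a) \<Rightarrow>
   ('x \<Rightarrow> 'x \<Rightarrow> 'a) \<Rightarrow> ('a \<Rightarrow> 'x \<Rightarrow> 'x) \<Rightarrow> nat \<Rightarrow> (nat \<Rightarrow> 'x) \<Rightarrow> real \<Rightarrow> ('a \<Rightarrow> complex) set" where
  "Avt sc st ip phi d xs \<beta> =
     {\<tau>. tracial_state sc st \<tau> \<and>
          (\<forall>a. \<tau> a = complex_of_real (exp (- \<beta>)) * (\<Sum>i=1..d. \<tau> (ip (xs i) (phi a (xs i)))))}"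

end

theory Submission imports Defs begin

text \<open>Iterating the defining identity of \<open>Avt\<^sub>\<beta>\<close> shows that the words of length \<open>k + 1\<close>
  contribute \<open>e\<^sup>k\<^sup>\<beta> \<tau>(\<Sum>\<^sub>i \<langle>x\<^sub>i, x\<^sub>i\<rangle>)\<close>, so every term \<open>k \<ge> 1\<close> of the series \<open>c\<^sub>\<tau>\<^sub>,\<^sub>\<beta>\<close> equals
  the same constant \<open>e\<^sup>-\<^sup>\<beta> \<tau>(\<Sum>\<^sub>i \<langle>x\<^sub>i, x\<^sub>i\<rangle>)\<close>. This constant is positive: if it vanished, a
  Cauchy-Schwarz argument for the trace combined with the unit decomposition would force
  \<open>\<tau>(\<langle>x\<^sub>i, a x\<^sub>i\<rangle>) = 0\<close> for all \<open>a\<close> and \<open>i\<close>, hence \<open>\<tau> = 0\<close> by the \<open>Avt\<^sub>\<beta>\<close> identity.\<close>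

lemma sum_words_Suc:
  fixes f :: "nat list \<Rightarrow> 'b::comm_monoid_add"
  shows "(\<Sum>w\<in>words d (Suc k). f w) = (\<Sum>i=1..d. \<Sum>w\<in>words d k. f (i # w))"
proof -
  have words_Suc: "words d (Suc k) = (\<lambda>(i, w). i # w) ` ({1..d} \<times> words d k)"
    by (auto simp: words_def image_iff length_Suc_conv)
  have "inj_on (\<lambda>(i, w). i # w) ({1..d} \<times> words d k)"
    by (auto simp: inj_on_def)
  then show ?thesis
    by (simp add: words_Suc sum.reindex sum.cartesian_product split_def)
qed

lemma sum_tens_ip_words_eq:
  assumes Avt_eq: "\<And>a. \<tau> a = complex_of_real (exp (- \<beta>)) * (\<Sum>i=1..d. \<tau> (ip (xs i) (phi a (xs i))))"
  shows "(\<Sum>w\<in>words d k. \<tau> (tens_ip ip phi xs a w)) = complex_of_real (exp (real k * \<beta>)) * \<tau> a"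
proof (induction k arbitrary: a)
  case 0
  have "words d 0 = {[]}" by (auto simp: words_def)
  then show ?case by simp
next
  case (Suc k)
  have step: "(\<Sum>i=1..d. \<tau> (ip (xs i) (phi a (xs i)))) = complex_of_real (exp \<beta>) * \<tau> a"
    by (subst (2) Avt_eq) (simp add: mult.assoc[symmetric] exp_minus flip: of_real_mult)
  have "(\<Sum>w\<in>words d (Suc k). \<tau> (tens_ip ip phi xs a w))
      = complex_of_real (exp (real k * \<beta>)) * (\<Sum>i=1..d. \<tau> (ip (xs i) (phi a (xs i))))"
    by (simp add: sum_words_Suc Suc sum_distrib_left)
  also have "\<dots> = complex_of_real (exp (real (Suc k) * \<beta>)) * \<tau> a"
    by (simp only: step) (simp add: mult.assoc[symmetric] distrib_right exp_add flip: of_real_mult)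
  finally show ?case .
qed

lemma sum_word_ip_words_Suc_eq:
  assumes "\<And>a. \<tau> a = complex_of_real (exp (- \<beta>)) * (\<Sum>i=1..d. \<tau> (ip (xs i) (phi a (xs i))))"
  shows "(\<Sum>\<mu>\<in>words d (Suc k). \<tau> (word_ip ip phi xs \<mu>))
       = complex_of_real (exp (real k * \<beta>)) * (\<Sum>i=1..d. \<tau> (ip (xs i) (xs i)))"
  by (simp add: sum_words_Suc sum_tens_ip_words_eq[where \<tau> = \<tau>, OF assms] sum_distrib_left)

lemma AvtD:
  assumes "\<tau> \<in> Avt sc st ip phi d xs \<beta>"
  shows "tracial_state sc st \<tau>"
    and "\<tau> a = complex_of_real (exp (- \<beta>)) * (\<Sum>i=1..d. \<tau> (ip (xs i) (phi a (xs i))))"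
  using assms unfolding Avt_def by blast+

lemma nonneg_affine_imp_slope_eq_0:
  fixes a b :: real
  assumes "\<And>t. 0 \<le> a + t * b"
  shows "b = 0"
proof (rule ccontr)
  assume "b \<noteq> 0"
  then have "a + (- (\<bar>a\<bar> + 1) / b) * b = a - (\<bar>a\<bar> + 1)" by simp
  with assms[of "- (\<bar>a\<bar> + 1) / b"] show False by linarith
qed

lemma tracial_state_mult_eq_0:
  assumes A: "cstar_algebra sc st" and T: "tracial_state sc st \<tau>"
    and z: "\<tau> (st z * z) = 0"
  shows "\<tau> (st y * z) = 0"
proof -
  define P u v where "P = \<tau> (st y * y)" and "u = \<tau> (st y * z)" and "v = \<tau> (st z * y)"
  \<comment> \<open>Cauchy-Schwarz: \<open>\<tau>((y + c z)\<^sup>* (y + c z)) \<ge> 0\<close> for all \<open>c\<close>, and this is real-affine in \<open>c\<close>\<close>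
  have pos: "Im (P + c * u + cnj c * v) = 0 \<and> 0 \<le> Re (P + c * u + cnj c * v)" for c
  proof -
    have m1: "\<And>c x y. sc c (x * y) = sc c x * y" and m2: "\<And>c x y. sc c (x * y) = x * sc c y"
      and s1: "\<And>x y. st (x + y) = st x + st y" and s2: "\<And>c x. st (sc c x) = sc (cnj c) (st x)"
      using A unfolding cstar_algebra_def by blast+
    have "st (y + sc c z) * (y + sc c z)
        = st y * y + st y * sc c z + sc (cnj c) (st z) * y + sc (cnj c) (st z) * sc c z"
      by (simp add: s1 s2 algebra_simps)
    also have "\<dots> = st y * y + sc c (st y * z) + sc (cnj c) (st z * y) + sc c (sc (cnj c) (st z * z))"
      by (simp only: m1[symmetric] m2[symmetric])
    finally have "\<tau> (st (y + sc c z) * (y + sc c z)) = P + c * u + cnj c * v"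
      using T z unfolding tracial_state_def P_def u_def v_def by simp
    moreover have "cstar_positive st (st (y + sc c z) * (y + sc c z))"
      unfolding cstar_positive_def by blast
    ultimately show ?thesis using T unfolding tracial_state_def by metis
  qed
  have "Im P = 0" using pos[of 0] by simp
  then have "Im u + Im v = 0" and "Re u - Re v = 0"
    using pos[of 1] pos[of \<i>] by simp_all
  moreover have "Re u + Re v = 0"
    by (rule nonneg_affine_imp_slope_eq_0[of "Re P"])
       (use pos[of "complex_of_real _"] in \<open>simp add: algebra_simps\<close>)
  moreover have "Im v - Im u = 0"
    by (rule nonneg_affine_imp_slope_eq_0[of "Re P"])
       (use pos[of "\<i> * complex_of_real _"] in \<open>simp add: algebra_simps\<close>)
  ultimately show ?thesis by (simp add: u_def[symmetric] complex_eq_iff)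
qed

lemma tracial_state_nonneg:
  assumes "tracial_state sc st \<tau>" and "cstar_positive st a"
  shows "Im (\<tau> a) = 0" and "0 \<le> Re (\<tau> a)"
  using assms unfolding tracial_state_def by meson+

lemma tracial_state_sum_eq_0_imp_eq_0:
  assumes T: "tracial_state sc st \<tau>" and pos: "\<And>i. i \<in> I \<Longrightarrow> cstar_positive st (f i)"
    and "finite I" and sum0: "Re (\<Sum>i\<in>I. \<tau> (f i)) = 0" and "i \<in> I"
  shows "\<tau> (f i) = 0"
proof -
  have "(\<Sum>j\<in>I. Re (\<tau> (f j))) = 0" using sum0 by simp
  then have "Re (\<tau> (f i)) = 0"
    using sum_nonneg_eq_0_iff[OF \<open>finite I\<close> tracial_state_nonneg(2)[OF T pos]] \<open>i \<in> I\<close> by simp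
  with tracial_state_nonneg(1)[OF T pos[OF \<open>i \<in> I\<close>]] show ?thesis by (simp add: complex_eq_iff)
qed

lemma tracial_state_ip_phi_eq_0:
  assumes C: "cstar_correspondence sc st scX ra ip phi" and U: "unit_decomposition ra ip d xs"
    and T: "tracial_state sc st \<tau>" and ip0: "\<And>i. i \<in> {1..d} \<Longrightarrow> \<tau> (ip (xs i) (xs i)) = 0"
    and i: "i \<in> {1..d}"
  shows "\<tau> (ip (xs i) (phi a (xs i))) = 0"
proof -
  have A: "cstar_algebra sc st" and ipra: "\<And>x y a. ip x (ra y a) = ip x y * a"
    and ipsym: "\<And>x y. ip y x = st (ip x y)" and phira: "\<And>a x b. phi a (ra x b) = ra (phi a x) b"
    using C unfolding cstar_correspondence_def by meson+
  have "Modules.additive \<tau>" "Modules.additive (ip x)" "Modules.additive (phi a)" for x a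
    using C T unfolding cstar_correspondence_def tracial_state_def Modules.additive_def by meson+
  note sums = additive.sum[OF \<open>Modules.additive \<tau>\<close>] additive.sum[OF \<open>Modules.additive (ip _)\<close>]
    additive.sum[OF \<open>Modules.additive (phi _)\<close>]
  have decomp: "\<And>z. (\<Sum>k=1..d. ra (xs k) (ip (xs k) z)) = z"
    using U unfolding unit_decomposition_def by blast
  have stst: "st (st x) = x" for x using A unfolding cstar_algebra_def by blast
  have sq_eq: "st (ip (xs k) (xs i)) * ip (xs k) (xs i) = ip (xs i) (ra (xs k) (ip (xs k) (xs i)))" for k
    by (simp add: ipra stst ipsym[of "xs k" "xs i"])
  \<comment> \<open>expanding \<open>x\<^sub>i\<close> in the unit decomposition writes \<open>\<tau>\<langle>x\<^sub>i, x\<^sub>i\<rangle>\<close> as a sum of positive terms\<close>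
  have sq_sum0: "Re (\<Sum>k=1..d. \<tau> (st (ip (xs k) (xs i)) * ip (xs k) (xs i))) = 0"
    using ip0[OF i] by (simp only: sq_eq sums[symmetric] decomp) simp
  have sq_pos: "cstar_positive st (st (ip (xs k) (xs i)) * ip (xs k) (xs i))" for k
    unfolding cstar_positive_def by blast
  have sq0: "\<tau> (st (ip (xs k) (xs i)) * ip (xs k) (xs i)) = 0" if "k \<in> {1..d}" for k
    using tracial_state_sum_eq_0_imp_eq_0[OF T sq_pos finite_atLeastAtMost sq_sum0 that] .
  have "ip (xs i) (phi a (xs i)) = (\<Sum>k=1..d. st (st (ip (xs i) (phi a (xs k)))) * ip (xs k) (xs i))"
    by (subst (2) decomp[symmetric]) (simp add: sums phira ipra stst)
  then show ?thesis
    using tracial_state_mult_eq_0[OF A T sq0] by (simp add: sums)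
qed

lemma Avt_sum_ip_pos:
  assumes C: "cstar_correspondence sc st scX ra ip phi" and U: "unit_decomposition ra ip d xs"
    and \<tau>: "\<tau> \<in> Avt sc st ip phi d xs \<beta>"
  shows "0 < Re (\<Sum>i=1..d. \<tau> (ip (xs i) (xs i)))"
proof (rule ccontr)
  note T = AvtD(1)[OF \<tau>]
  have pos: "cstar_positive st (ip x x)" for x
    using C unfolding cstar_correspondence_def by meson
  assume "\<not> 0 < Re (\<Sum>i=1..d. \<tau> (ip (xs i) (xs i)))"
  moreover have "0 \<le> Re (\<Sum>i=1..d. \<tau> (ip (xs i) (xs i)))"
    unfolding Re_sum by (rule sum_nonneg) (rule tracial_state_nonneg(2)[OF T pos])
  ultimately have ip0: "\<tau> (ip (xs i) (xs i)) = 0" if "i \<in> {1..d}" for i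
    using tracial_state_sum_eq_0_imp_eq_0[OF T pos _ _ that] by simp
  have "\<tau> a = 0" for a
  proof -
    have "(\<Sum>i=1..d. \<tau> (ip (xs i) (phi a (xs i)))) = 0"
      using tracial_state_ip_phi_eq_0[OF C U T ip0] by (intro sum.neutral) blast
    then show ?thesis by (subst AvtD(2)[OF \<tau>]) simp
  qed
  then have "\<tau> = (\<lambda>_. 0)" by auto
  with T show False unfolding tracial_state_def by (simp add: onorm_zero)
qed

lemma suminf_ennreal_eq_top_if_not_tendsto_0:
  fixes g :: "nat \<Rightarrow> real"
  assumes "\<And>k. 0 \<le> g k" and "\<not> g \<longlonglongrightarrow> 0"
  shows "(\<Sum>k. ennreal (g k)) = \<infinity>"
proof (rule ccontr)
  assume "(\<Sum>k. ennreal (g k)) \<noteq> \<infinity>"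
  then have "summable g"
    unfolding infinity_ennreal_def by (rule summable_suminf_not_top[OF assms(1)])
  with assms(2) show False using summable_LIMSEQ_zero by blast
qed

theorem proposition5p4:
  fixes sc :: "complex \<Rightarrow> 'a::{real_normed_algebra,banach} \<Rightarrow> 'a"
    and st :: "'a \<Rightarrow> 'a"
    and scX :: "complex \<Rightarrow> 'x::banach \<Rightarrow> 'x"
    and ra :: "'x \<Rightarrow> 'a \<Rightarrow> 'x"
    and ip :: "'x \<Rightarrow> 'x \<Rightarrow> 'a"
    and phi :: "'a \<Rightarrow> 'x \<Rightarrow> 'x"
    and d :: nat and xs :: "nat \<Rightarrow> 'x"
    and \<tau> :: "'a \<Rightarrow> complex" and \<beta> :: real
  assumes "cstar_correspondence sc st scX ra ip phi"
    and "unit_decomposition ra ip d xs"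
    and "\<beta> > 0"
    and "\<tau> \<in> Avt sc st ip phi d xs \<beta>"
  shows "c_tau_beta ip phi d xs \<tau> \<beta> = \<infinity>"
proof -
  define S where "S = Re (\<Sum>i=1..d. \<tau> (ip (xs i) (xs i)))"
  define g where "g k = exp (- real k * \<beta>) *
    (if k = 0 then 1 else (\<Sum>\<mu>\<in>words d k. Re (\<tau> (word_ip ip phi xs \<mu>))))" for k
  have "S > 0" unfolding S_def using Avt_sum_ip_pos assms(1,2,4) .
  have g_Suc: "g (Suc k) = exp (- \<beta>) * S" for k
  proof -
    have "(\<Sum>\<mu>\<in>words d (Suc k). Re (\<tau> (word_ip ip phi xs \<mu>))) = exp (real k * \<beta>) * S"
      unfolding S_def Re_sum[symmetric] sum_word_ip_words_Suc_eq[where \<tau> = \<tau>, OF AvtD(2)[OF assms(4)]] by simp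
    then have "g (Suc k) = exp (- real (Suc k) * \<beta>) * (exp (real k * \<beta>) * S)"
      unfolding g_def by simp
    also have "\<dots> = exp (- \<beta>) * S"
      by (simp add: mult.assoc[symmetric] algebra_simps flip: exp_add)
    finally show ?thesis .
  qed
  have "0 \<le> g k" for k
    using \<open>S > 0\<close> by (cases k) (simp add: g_def, simp add: g_Suc)
  moreover have "\<not> g \<longlonglongrightarrow> 0"
  proof
    assume "g \<longlonglongrightarrow> 0"
    moreover have "g \<longlonglongrightarrow> exp (- \<beta>) * S"
      by (rule LIMSEQ_imp_Suc) (simp add: g_Suc)
    ultimately show False using LIMSEQ_unique \<open>S > 0\<close> by fastforce
  qed
  ultimately show ?thesis
    unfolding c_tau_beta_def g_def[symmetric] by (rule suminf_ennreal_eq_top_if_not_tendsto_0)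
qed

end
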